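(* Every yes-instance of Unweighted Borda Manipulation under single-peaked elections has a solution in which every manipulator places the distinguished candidate $p$ in his/her highest position (i.e., $\pi(p)=|\mathcal{C}|+1$ for every manipulator's vote $\pi$).
   Context: Borda elections: candidates $\mathcal{C}\cup\{p\}$ ($p\notin\mathcal{C}$); each vote is a bijection $\pi:\mathcal{C}\cup\{p\}\to\{1,\dots,|\mathcal{C}|+1\}$, giving candidate $c$ score $\pi(c)-1$; total score is the sum over all votes; $p$ wins iff its total score is strictly higher than that of every other candidate. Given a bijection $\mathcal{L}:\mathcal{C}\cup\{p\}\to\{1,\dots,|\mathcal{C}|+1\}$, a vote $\pi$ is coincident with $\mathcal{L}$ if for any three distinct candidates $a,b,c$ with $\mathcal{L}(a)<\mathcal{L}(b)<\mathcal{L}(c)$ or $\mathcal{L}(c)<\mathcal{L}(b)<\mathcal{L}(a)$, $\pi(c)>\pi(b)$ implies $\pi(b)>\pi(a)$. An election is single-peaked if there exists such an $\mathcal{L}$ (a harmonious order) with which all votes are coincident. UBM under single-peaked elections: input is a single-peaked election with candidates $\mathcal{C}\cup\{p\}$ and votes $\Pi_{\mathcal{V}}$ in which $p$ is not the winner, a harmonious order $\mathcal{L}$, and a set $\mathcal{V}'$ of manipulators. A solution is a multiset of votes $\Pi_{\mathcal{V}'}$, one per manipulator, each coincident with $\mathcal{L}$, such that $p$ has strictly higher total score than every candidate of $\mathcal{C}$ with respect to $\Pi_{\mathcal{V}}\uplus\Pi_{\mathcal{V}'}$. *)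

theory Defs
  imports Main "HOL-Library.Multiset"
begin

definition is_vote :: "'a set \<Rightarrow> 'a \<Rightarrow> ('a \<Rightarrow> nat) \<Rightarrow> bool" where
  "is_vote C p \<pi> \<longleftrightarrow> bij_betw \<pi> (insert p C) {1..card C + 1}"

definition borda_score :: "('a \<Rightarrow> nat) multiset \<Rightarrow> 'a \<Rightarrow> nat" where
  "borda_score V c = (\<Sum>\<pi>\<in>#V. \<pi> c - 1)"

definition borda_winner :: "'a set \<Rightarrow> 'a \<Rightarrow> ('a \<Rightarrow> nat) multiset \<Rightarrow> bool" where
  "borda_winner C p V \<longleftrightarrow> (\<forall>c\<in>C. c \<noteq> p \<longrightarrow> borda_score V c < borda_score V p)"

definition coincident :: "'a set \<Rightarrow> 'a \<Rightarrow> ('a \<Rightarrow> nat) \<Rightarrow> ('a \<Rightarrow> nat) \<Rightarrow> bool" where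
  "coincident C p L \<pi> \<longleftrightarrow>
     (\<forall>a\<in>insert p C. \<forall>b\<in>insert p C. \<forall>c\<in>insert p C.
        a \<noteq> b \<and> b \<noteq> c \<and> a \<noteq> c \<and>
        ((L a < L b \<and> L b < L c) \<or> (L c < L b \<and> L b < L a)) \<longrightarrow>
        (\<pi> c > \<pi> b \<longrightarrow> \<pi> b > \<pi> a))"

definition ubm_solution :: "'a set \<Rightarrow> 'a \<Rightarrow> ('a \<Rightarrow> nat) \<Rightarrow> ('a \<Rightarrow> nat) multiset \<Rightarrow> nat
    \<Rightarrow> ('a \<Rightarrow> nat) multiset \<Rightarrow> bool" where
  "ubm_solution C p L V k W \<longleftrightarrow>
     size W = k \<and>
     (\<forall>\<pi>\<in>#W. is_vote C p \<pi> \<and> coincident C p L \<pi>) \<and>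
     borda_winner C p (V + W)"

end

theory Submission
  imports Defs
begin

text \<open>In a vote \<open>\<pi>\<close> that is single-peaked with respect to \<open>L\<close>, the candidates ranked above \<open>p\<close>
  all lie on the same side of \<open>p\<close> in \<open>L\<close>. Move \<open>p\<close> to the top, keep every candidate ranked below
  \<open>p\<close> in place, and put the candidates that were above \<open>p\<close> into the positions \<open>\<pi> p, \<dots>, |C|\<close>,
  ordered so that those closer to \<open>p\<close> in \<open>L\<close> are ranked higher. The new vote is again
  single-peaked, \<open>p\<close> gains \<open>|C| + 1 - \<pi> p\<close> points and no other candidate gains as much, so
  replacing every manipulator's vote in a solution in this way yields a solution.\<close>

definition L_dist :: "('a \<Rightarrow> nat) \<Rightarrow> 'a \<Rightarrow> 'a \<Rightarrow> int" where
  "L_dist L p x = \<bar>int (L x) - int (L p)\<bar>"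

definition push_to_top :: "'a set \<Rightarrow> 'a \<Rightarrow> ('a \<Rightarrow> nat) \<Rightarrow> ('a \<Rightarrow> nat) \<Rightarrow> 'a \<Rightarrow> nat" where
  "push_to_top C p L \<pi> x =
     (if x = p then card C + 1
      else if \<pi> p < \<pi> x
      then \<pi> p - 1 + card {y \<in> C. \<pi> p < \<pi> y \<and> L_dist L p x \<le> L_dist L p y}
      else \<pi> x)"

lemma coincident_no_valley:
  assumes "coincident C p L \<pi>"
    and "a \<in> insert p C" "b \<in> insert p C" "c \<in> insert p C"
    and "L a < L b" "L b < L c" "\<pi> b < \<pi> a"
  shows "\<pi> c \<le> \<pi> b"
  using assms unfolding coincident_def
  by (metis less_asym' nat_less_le not_le_imp_less)

lemma coincidentI:
  assumes inj: "inj_on \<pi> (insert p C)"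
    and no_valley: "\<And>a b c. a \<in> insert p C \<Longrightarrow> b \<in> insert p C \<Longrightarrow> c \<in> insert p C \<Longrightarrow>
           L a < L b \<Longrightarrow> L b < L c \<Longrightarrow> \<pi> b < \<pi> a \<Longrightarrow> \<pi> b < \<pi> c \<Longrightarrow> False"
  shows "coincident C p L \<pi>"
  unfolding coincident_def
proof (intro ballI impI)
  fix a b c
  assume abc: "a \<in> insert p C" "b \<in> insert p C" "c \<in> insert p C"
    and H: "a \<noteq> b \<and> b \<noteq> c \<and> a \<noteq> c \<and> (L a < L b \<and> L b < L c \<or> L c < L b \<and> L b < L a)"
    and "\<pi> b < \<pi> c"
  moreover have "\<pi> a \<noteq> \<pi> b"
    using inj abc H by (meson inj_on_contraD)
  ultimately show "\<pi> a < \<pi> b"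
    using no_valley[of a b c] no_valley[of c b a] by (meson linorder_neqE_nat)
qed

lemma borda_winner_if_gain_dominated:
  assumes win: "borda_winner C p (V + W)"
    and gain: "\<And>\<pi> c. \<pi> \<in># W \<Longrightarrow> c \<in> C \<Longrightarrow>
                 (f \<pi> c - 1) + (\<pi> p - 1) \<le> (\<pi> c - 1) + (f \<pi> p - 1)"
  shows "borda_winner C p (V + image_mset f W)"
  unfolding borda_winner_def
proof (intro ballI impI)
  fix c assume c: "c \<in> C" "c \<noteq> p"
  have score: "borda_score (V + image_mset f W) x = borda_score V x + (\<Sum>\<pi>\<in>#W. f \<pi> x - 1)"
    "borda_score (V + W) x = borda_score V x + (\<Sum>\<pi>\<in>#W. \<pi> x - 1)" for x
    unfolding borda_score_def by (simp_all add: image_mset.compositionality comp_def)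
  have "(\<Sum>\<pi>\<in>#W. f \<pi> c - 1) + (\<Sum>\<pi>\<in>#W. \<pi> p - 1)
        \<le> (\<Sum>\<pi>\<in>#W. \<pi> c - 1) + (\<Sum>\<pi>\<in>#W. f \<pi> p - 1)"
    using sum_mset_mono[of W "\<lambda>\<pi>. (f \<pi> c - 1) + (\<pi> p - 1)" "\<lambda>\<pi>. (\<pi> c - 1) + (f \<pi> p - 1)"]
      gain[OF _ c(1)] by (simp add: sum_mset.distrib)
  moreover have "borda_score (V + W) c < borda_score (V + W) p"
    using win c unfolding borda_winner_def by blast
  ultimately show "borda_score (V + image_mset f W) c < borda_score (V + image_mset f W) p"
    unfolding score by linarith
qed

locale coincident_vote =
  fixes C :: "'a set" and p :: 'a and L :: "'a \<Rightarrow> nat" and \<pi> :: "'a \<Rightarrow> nat"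
  assumes finite_C: "finite C" and p_notin_C: "p \<notin> C"
    and inj_L: "inj_on L (insert p C)"
    and vote: "is_vote C p \<pi>" and coincident: "coincident C p L \<pi>"
begin

abbreviation \<sigma> :: "'a \<Rightarrow> nat" where "\<sigma> \<equiv> push_to_top C p L \<pi>"
abbreviation d :: "'a \<Rightarrow> int" where "d \<equiv> L_dist L p"

definition above :: "'a set" where "above = {x \<in> C. \<pi> p < \<pi> x}"

lemma inj_\<pi>: "inj_on \<pi> (insert p C)"
  using vote unfolding is_vote_def bij_betw_def by blast

lemma \<pi>_range: "x \<in> insert p C \<Longrightarrow> 1 \<le> \<pi> x \<and> \<pi> x \<le> card C + 1"
  using vote unfolding is_vote_def bij_betw_def by auto

lemma L_neq_L_p: "x \<in> C \<Longrightarrow> L x \<noteq> L p"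
  using inj_L p_notin_C by (metis inj_on_contraD insertCI)

lemma above_same_side:
  assumes "x \<in> above" "y \<in> above"
  shows "L x < L p \<longleftrightarrow> L y < L p"
proof (rule ccontr)
  assume "\<not> ?thesis"
  then consider "L x < L p" "L p < L y" | "L y < L p" "L p < L x"
    using assms L_neq_L_p unfolding above_def by fastforce
  then show False
    using coincident_no_valley[OF coincident, of x p y] coincident_no_valley[OF coincident, of y p x]
      assms unfolding above_def by cases auto
qed

lemma inj_on_d_above: "inj_on d above"
proof (rule inj_onI)
  fix x y assume xy: "x \<in> above" "y \<in> above" and "d x = d y"
  then have "L x = L y"
    using above_same_side[OF xy] L_neq_L_p[of x] L_neq_L_p[of y]
    unfolding above_def L_dist_def by auto
  then show "x = y"
    using inj_L xy unfolding above_def by (auto dest: inj_onD)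
qed

lemma \<sigma>_above: "x \<in> above \<Longrightarrow> \<sigma> x = \<pi> p - 1 + card {y \<in> above. d x \<le> d y}"
  using p_notin_C unfolding above_def push_to_top_def by auto

lemma \<sigma>_below: "x \<in> insert p C \<Longrightarrow> x \<noteq> p \<Longrightarrow> x \<notin> above \<Longrightarrow> \<sigma> x = \<pi> x \<and> \<pi> x < \<pi> p"
  using inj_\<pi> unfolding above_def push_to_top_def
  by (auto dest: inj_on_contraD[of \<pi> _ x p])

lemma \<sigma>_p: "\<sigma> p = card C + 1"
  unfolding push_to_top_def by simp

lemma card_above: "card above \<le> card C + 1 - \<pi> p"
proof -
  have "card above = card (\<pi> ` above)"
    using inj_\<pi> by (intro card_image[symmetric]) (auto simp: above_def intro: inj_on_subset)
  also have "\<dots> \<le> card {\<pi> p + 1..card C + 1}"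
    using \<pi>_range by (intro card_mono) (auto simp: above_def)
  finally show ?thesis by simp
qed

lemma \<sigma>_above_bounds: "x \<in> above \<Longrightarrow> \<pi> p \<le> \<sigma> x \<and> \<sigma> x \<le> card C"
proof -
  assume x: "x \<in> above"
  let ?S = "{y \<in> above. d x \<le> d y}"
  have "finite above" using finite_C unfolding above_def by simp
  then have "1 \<le> card ?S" "card ?S \<le> card above"
    using x by (auto intro: card_mono simp: Suc_le_eq card_gt_0_iff)
  then show ?thesis
    using \<sigma>_above[OF x] card_above \<pi>_range[OF insertI1] by linarith
qed

lemma \<sigma>_antimono:
  assumes x: "x \<in> above" and y: "y \<in> above" and "d x < d y"
  shows "\<sigma> y < \<sigma> x"
proof -
  have "x \<in> {z \<in> above. d x \<le> d z}" "x \<notin> {z \<in> above. d y \<le> d z}"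
    using assms by auto
  then have "{z \<in> above. d y \<le> d z} \<subset> {z \<in> above. d x \<le> d z}"
    using assms by fastforce
  then have "card {z \<in> above. d y \<le> d z} < card {z \<in> above. d x \<le> d z}"
    using finite_C unfolding above_def by (intro psubset_card_mono) auto
  then show ?thesis using \<sigma>_above[OF x] \<sigma>_above[OF y] by linarith
qed

lemma inj_on_\<sigma>: "inj_on \<sigma> (insert p C)"
proof (rule inj_onI, rule ccontr)
  fix x y assume x: "x \<in> insert p C" and y: "y \<in> insert p C" and eq: "\<sigma> x = \<sigma> y" and "x \<noteq> y"
  have \<sigma>_le: "\<sigma> z \<le> card C" if "z \<in> insert p C" "z \<noteq> p" for z
    using \<sigma>_above_bounds[of z] \<sigma>_below[OF that] \<pi>_range[of p] by (cases "z \<in> above") auto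
  consider "x = p \<or> y = p" | "x \<in> above" "y \<in> above"
    | "x \<noteq> p" "y \<noteq> p" "x \<in> above \<longleftrightarrow> y \<notin> above" | "x \<noteq> p" "y \<noteq> p" "x \<notin> above" "y \<notin> above"
    by blast
  then show False
  proof cases
    case 1
    then show False using \<sigma>_le[OF x] \<sigma>_le[OF y] eq \<open>x \<noteq> y\<close> \<sigma>_p by auto
  next
    case 2
    then have "d x < d y \<or> d y < d x"
      using inj_on_d_above \<open>x \<noteq> y\<close> by (metis inj_on_contraD linorder_neqE)
    then show False using \<sigma>_antimono 2 eq by (metis less_irrefl)
  next
    case 3
    then show False
      using \<sigma>_above_bounds \<sigma>_below x y eq by fastforce
  next
    case 4
    then show False using \<sigma>_below x y eq inj_\<pi> \<open>x \<noteq> y\<close> by (metis inj_on_contraD)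
  qed
qed

lemma push_to_top_vote: "is_vote C p \<sigma>"
proof -
  have range: "\<sigma> ` insert p C \<subseteq> {1..card C + 1}"
  proof (intro image_subsetI)
    fix x assume x: "x \<in> insert p C"
    show "\<sigma> x \<in> {1..card C + 1}"
      using \<sigma>_p \<sigma>_above_bounds[of x] \<sigma>_below[OF x] \<pi>_range[OF x] \<pi>_range[of p]
      by (cases "x = p"; cases "x \<in> above") auto
  qed
  have "card (\<sigma> ` insert p C) = card {1..card C + 1}"
    using card_image[OF inj_on_\<sigma>] finite_C p_notin_C by simp
  then have "\<sigma> ` insert p C = {1..card C + 1}"
    using range by (intro card_subset_eq) auto
  then show ?thesis
    unfolding is_vote_def bij_betw_def using inj_on_\<sigma> by blast
qed

lemma push_to_top_gain:
  assumes c: "c \<in> C"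
  shows "(\<sigma> c - 1) + (\<pi> p - 1) \<le> (\<pi> c - 1) + (\<sigma> p - 1)"
proof (cases "c \<in> above")
  case True
  then show ?thesis using \<sigma>_above_bounds \<sigma>_p unfolding above_def by fastforce
next
  case False
  have "c \<noteq> p" using c p_notin_C by blast
  then show ?thesis using \<sigma>_below[OF _ _ False] c \<pi>_range[of c] \<pi>_range[OF insertI1] \<sigma>_p by auto
qed

lemma between_closer:
  assumes b: "b \<in> above"
    and a: "a = p \<or> a \<in> above" and c: "c = p \<or> c \<in> above"
    and "L a < L b" "L b < L c"
  shows "(a \<in> above \<and> d b < d a) \<or> (c \<in> above \<and> d b < d c)"
proof -
  consider "a = p" | "c = p" | "a \<in> above" "c \<in> above"
    using a c by blast
  then show ?thesis
  proof cases
    case 3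
    then show ?thesis
      using assms above_same_side[OF b] L_neq_L_p[of b] b unfolding L_dist_def above_def by auto
  qed (use assms in \<open>auto simp: L_dist_def\<close>)
qed

lemma push_to_top_coincident: "coincident C p L \<sigma>"
proof (rule coincidentI[OF inj_on_\<sigma>])
  fix a b c
  assume abc: "a \<in> insert p C" "b \<in> insert p C" "c \<in> insert p C"
    and L: "L a < L b" "L b < L c" and valley: "\<sigma> b < \<sigma> a" "\<sigma> b < \<sigma> c"
  have "b \<noteq> p" using valley \<sigma>_p \<sigma>_above_bounds[of a] \<sigma>_below[OF abc(1)] \<pi>_range[of p]
    by (cases "a = p"; cases "a \<in> above") auto
  show False
  proof (cases "b \<in> above")
    case True
    \<comment> \<open>Candidates ranked below \<open>p\<close> keep their positions, which are all below \<open>\<sigma> b\<close>.\<close>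
    have "x = p \<or> x \<in> above" if "x \<in> insert p C" "\<sigma> b < \<sigma> x" for x
      using that \<sigma>_below[OF that(1)] \<sigma>_above_bounds[OF True] by fastforce
    then have "(a \<in> above \<and> d b < d a) \<or> (c \<in> above \<and> d b < d c)"
      using between_closer[OF True _ _ L] abc valley by blast
    then show False using \<sigma>_antimono[OF True] valley by fastforce
  next
    case False
    have "\<pi> b < \<pi> x" if "x \<in> insert p C" "\<sigma> b < \<sigma> x" for x
      using that \<sigma>_below[OF abc(2) \<open>b \<noteq> p\<close> False] \<sigma>_below[OF that(1)] p_notin_C
      by (cases "x = p \<or> x \<in> above") (auto simp: above_def)
    then show False
      using coincident_no_valley[OF coincident abc L] abc valley by fastforce
  qed
qed

end

theorem mainTheorem6:
  fixes C :: "'a set" and p :: 'a and L :: "'a \<Rightarrow> nat"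
    and V :: "('a \<Rightarrow> nat) multiset" and k :: nat
  assumes "finite C"
    and "p \<notin> C"
    and "bij_betw L (insert p C) {1..card C + 1}"
    and "\<forall>\<pi>\<in>#V. is_vote C p \<pi> \<and> coincident C p L \<pi>"
    and "\<not> borda_winner C p V"
    and "\<exists>W. ubm_solution C p L V k W"
  shows "\<exists>W. ubm_solution C p L V k W \<and> (\<forall>\<pi>\<in>#W. \<pi> p = card C + 1)"
proof -
  obtain W where W: "ubm_solution C p L V k W" using assms(6) by blast
  have "inj_on L (insert p C)" using assms(3) by (rule bij_betw_imp_inj_on)
  then have cv: "coincident_vote C p L \<pi>" if "\<pi> \<in># W" for \<pi>
    using W that assms(1,2) unfolding ubm_solution_def coincident_vote_def by blast
  let ?W' = "image_mset (push_to_top C p L) W"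
  have "borda_winner C p (V + ?W')"
    using W coincident_vote.push_to_top_gain[OF cv]
    by (intro borda_winner_if_gain_dominated) (auto simp: ubm_solution_def)
  then have "ubm_solution C p L V k ?W'"
    using W coincident_vote.push_to_top_vote[OF cv] coincident_vote.push_to_top_coincident[OF cv]
    unfolding ubm_solution_def by auto
  moreover have "\<forall>\<pi>\<in>#?W'. \<pi> p = card C + 1"
    by (auto simp: push_to_top_def)
  ultimately show ?thesis by blast
qed

end
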